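(* Let $k\ge1$ and $u,w\in\mathcal S_\infty$ with $u\le_k w$, $u\ne w$. A maximal chain $u=u_0\lessdot_k u_1\lessdot_k\cdots\lessdot_k u_n=w$ of the interval $[u,w]_k$, with $u_i=u_{i-1}(a_i\,b_i)$, $a_i\le k<b_i$, is the CM-chain of $[u,w]_k$ if and only if it has no inversions.
   Context: $\mathcal S_\infty$ is the group of permutations of $\{1,2,\dots\}$ fixing all but finitely many points; $u(a\,b)$ is $u$ with the entries in positions $a,b$ swapped; $\ell$ is the number of inversions. The $k$-Bruhat order $\le_k$ is the reflexive–transitive closure of covers $u\lessdot_k u(a\,b)$ with $a\le k<b$ and $\ell(u(a\,b))=\ell(u)+1$; $[u,w]_k$ is its interval. CM-chain: if $\ell(w)=\ell(u)+1$ it is the unique chain $u\lessdot_k w$. If $\ell(w)>\ell(u)+1$, there are (known) unique integers $a\le k<b$ such that (I) $u(a)<w(a)$ and $w(a)=\max\{w(j):j\le k,\,u(j)<w(j)\}$, and (II) $u(b)>u(a)\ge w(b)$ and $w(b)=\min\{w(j):j>k,\,u(j)>u(a)\ge w(j)\}$; with $u_1=u(a\,b)$ one has $u\lessdot_k u_1\le_k w$, and the CM-chain of $[u,w]_k$ is $u$ followed by the CM-chain of $[u_1,w]_k$. An inversion of the maximal chain above is a pair $(i,j)$ with $1\le i<j\le n$ such that either $w(a_i)<w(a_j)$, or $w(a_i)=w(a_j)$ and $w(b_i)>w(b_j)$. *)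

theory Defs
  imports Main
begin

text \<open>Permutations of the positive integers {1,2,...} fixing all but finitely many
points, represented as functions on nat fixing 0.\<close>
definition S_inf :: "(nat \<Rightarrow> nat) set" where
  "S_inf = {u. bij u \<and> u 0 = 0 \<and> finite {i. u i \<noteq> i}}"

definition pswap :: "(nat \<Rightarrow> nat) \<Rightarrow> nat \<Rightarrow> nat \<Rightarrow> (nat \<Rightarrow> nat)" where
  "pswap u a b = u(a := u b, b := u a)"

definition len :: "(nat \<Rightarrow> nat) \<Rightarrow> nat" where
  "len u = card {(i, j). 1 \<le> i \<and> i < j \<and> u i > u j}"

definition kcover :: "nat \<Rightarrow> (nat \<Rightarrow> nat) \<Rightarrow> (nat \<Rightarrow> nat) \<Rightarrow> bool" where
  "kcover k u v \<longleftrightarrow> (\<exists>a b. 1 \<le> a \<and> a \<le> k \<and> k < b \<and> v = pswap u a b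
                              \<and> len v = len u + 1)"

definition kle :: "nat \<Rightarrow> (nat \<Rightarrow> nat) \<Rightarrow> (nat \<Rightarrow> nat) \<Rightarrow> bool" where
  "kle k = (kcover k)\<^sup>*\<^sup>*"

text \<open>A maximal chain u = u_0 < u_1 < ... < u_n = w of [u,w]_k, encoded by the list
  of pairs (a_i, b_i) with u_i = u_{i-1}(a_i b_i), a_i \<le> k < b_i, each step a k-cover.\<close>
fun kchain :: "nat \<Rightarrow> (nat \<Rightarrow> nat) \<Rightarrow> (nat \<Rightarrow> nat) \<Rightarrow> (nat \<times> nat) list \<Rightarrow> bool" where
  "kchain k u w [] \<longleftrightarrow> u = w"
| "kchain k u w ((a, b) # ps) \<longleftrightarrow>
     1 \<le> a \<and> a \<le> k \<and> k < b \<and> len (pswap u a b) = len u + 1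
     \<and> kchain k (pswap u a b) w ps"

definition condI :: "nat \<Rightarrow> (nat \<Rightarrow> nat) \<Rightarrow> (nat \<Rightarrow> nat) \<Rightarrow> nat \<Rightarrow> bool" where
  "condI k u w a \<longleftrightarrow> u a < w a \<and>
     w a = Max {w j | j. 1 \<le> j \<and> j \<le> k \<and> u j < w j}"

definition condII :: "nat \<Rightarrow> (nat \<Rightarrow> nat) \<Rightarrow> (nat \<Rightarrow> nat) \<Rightarrow> nat \<Rightarrow> nat \<Rightarrow> bool" where
  "condII k u w a b \<longleftrightarrow> u b > u a \<and> u a \<ge> w b \<and>
     w b = Min {w j | j. j > k \<and> u j > u a \<and> u a \<ge> w j}"

inductive cm_chain :: "nat \<Rightarrow> (nat \<Rightarrow> nat) \<Rightarrow> (nat \<Rightarrow> nat) \<Rightarrow> (nat \<times> nat) list \<Rightarrow> bool"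
  for k where
  cm_base: "\<lbrakk>kle k u w; len w = len u + 1; 1 \<le> a; a \<le> k; k < b; w = pswap u a b\<rbrakk>
            \<Longrightarrow> cm_chain k u w [(a, b)]"
| cm_step: "\<lbrakk>kle k u w; len w > len u + 1; 1 \<le> a; a \<le> k; k < b;
             condI k u w a; condII k u w a b; cm_chain k (pswap u a b) w ps\<rbrakk>
            \<Longrightarrow> cm_chain k u w ((a, b) # ps)"

text \<open>Inversions of a chain given by pairs (a_i,b_i), i = 1..n (0-indexed list here).\<close>
definition chain_inversions :: "(nat \<Rightarrow> nat) \<Rightarrow> (nat \<times> nat) list \<Rightarrow> (nat \<times> nat) set" where
  "chain_inversions w ps = {(i, j). i < j \<and> j < length ps \<and>
      (w (fst (ps ! i)) < w (fst (ps ! j)) \<or>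
       (w (fst (ps ! i)) = w (fst (ps ! j)) \<and> w (snd (ps ! i)) > w (snd (ps ! j))))}"

end

theory Submission
  imports Defs
begin

(* Along a k-chain the entries in positions \<le> k only increase and those in positions > k only
  decrease. A cover u(a b) of u has u(a) < u(b) and no position strictly between a and b holds
  a value between u(a) and u(b), since such a position would add two more inversions; hence two
  positions on the same side of k never change their relative order along a chain.

  Every
  left position that moves is the first entry of some step, so (I) says exactly that no later
  first entry has a larger final value. For (II), a right position q with u(q) > u(a) but
  w(q) < w(b) cannot exist in a chain without inversions: either a later step again uses a,
  with a right partner of no smaller final value, or position a already holds w(a) after the
  first step, and then the value in q would have to cross w(a) in a single cover, which the
  no-between property or the preserved order of left positions forbids. *)

definition invs :: "(nat \<Rightarrow> nat) \<Rightarrow> (nat \<times> nat) set" where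
  "invs u = {(i, j). 1 \<le> i \<and> i < j \<and> u i > u j}"

lemma len_eq_card_invs: "len u = card (invs u)"
  by (simp add: len_def invs_def)

lemma S_inf_inj: "u \<in> S_inf \<Longrightarrow> inj u"
  by (simp add: S_inf_def bij_is_inj)

lemma finite_invs:
  assumes "u \<in> S_inf"
  shows "finite (invs u)"
proof -
  have "finite {i. u i \<noteq> i}" and inj: "inj u"
    using assms by (auto simp: S_inf_def bij_is_inj)
  then obtain N where N: "{i. u i \<noteq> i} \<subseteq> {..<N}"
    unfolding finite_nat_set_iff_bounded by blast
  then have fixed: "u i = i" if "N \<le> i" for i
    using that by force
  have below: "u i < N" if "i < N" for i
  proof (rule ccontr)
    assume "\<not> u i < N"
    then have "u (u i) = u i" using fixed by simp
    then have "u i = i" using inj by (simp add: inj_eq)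
    with that \<open>\<not> u i < N\<close> show False by simp
  qed
  have "j < N" if "i < j" "u j < u i" for i j
  proof (rule ccontr)
    assume "\<not> j < N"
    then show False
      using that fixed[of j] fixed[of i] below[of i] by (cases "i < N") auto
  qed
  then have "invs u \<subseteq> {..<N} \<times> {..<N}"
    by (fastforce simp: invs_def)
  then show ?thesis
    by (rule finite_subset) auto
qed

lemma pswap_S_inf:
  assumes "u \<in> S_inf" "1 \<le> a" "1 \<le> b"
  shows "pswap u a b \<in> S_inf"
proof -
  let ?t = "\<lambda>x. if x = a then b else if x = b then a else x"
  have "bij ?t" by (rule involuntory_imp_bij) auto
  moreover have "pswap u a b = u \<circ> ?t" by (auto simp: pswap_def)
  ultimately have "bij (pswap u a b)"
    using assms(1) by (simp add: S_inf_def bij_comp)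
  moreover have "{i. pswap u a b i \<noteq> i} \<subseteq> {i. u i \<noteq> i} \<union> {a, b}"
    by (auto simp: pswap_def)
  then have "finite {i. pswap u a b i \<noteq> i}"
    using assms(1) by (auto simp: S_inf_def intro: finite_subset)
  moreover have "pswap u a b 0 = 0"
    using assms by (simp add: S_inf_def pswap_def)
  ultimately show ?thesis
    by (simp add: S_inf_def)
qed

lemma pswap_at_left [simp]: "pswap u a b a = u b"
  and pswap_at_right [simp]: "pswap u a b b = u a"
  and pswap_other: "p \<noteq> a \<Longrightarrow> p \<noteq> b \<Longrightarrow> pswap u a b p = u p"
  by (auto simp: pswap_def)

lemma pswap_pswap: "a \<noteq> b \<Longrightarrow> pswap (pswap u a b) a b = u"
  by (auto simp: pswap_def)

text \<open>When u(a) < u(b), exchanging a and b in the pairs whose other position lies outside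
  [a, b] turns the inversions of u into inversions of u(a b).\<close>
definition transpose_pair :: "nat \<Rightarrow> nat \<Rightarrow> nat \<times> nat \<Rightarrow> nat \<times> nat" where
  "transpose_pair a b = (\<lambda>(i, j).
     if j = a \<and> i < a then (i, b) else if j = b \<and> i < a then (i, a)
     else if i = a \<and> b < j then (b, j) else if i = b \<and> b < j then (a, j) else (i, j))"

lemma transpose_pair_involution: "a < b \<Longrightarrow> transpose_pair a b (transpose_pair a b p) = p"
  by (cases p) (auto simp: transpose_pair_def)

lemma len_add_card_le_len_pswap:
  assumes "u \<in> S_inf" "1 \<le> a" "a < b" "u a < u b"
    and E: "E \<subseteq> insert (a, b)
      (\<Union>c \<in> {c. a < c \<and> c < b \<and> u a < u c \<and> u c < u b}. {(a, c), (c, b)})"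
  shows "len u + card E \<le> len (pswap u a b)"
proof -
  let ?v = "pswap u a b" and ?t = "transpose_pair a b"
  have fin: "finite (invs ?v)"
    using assms by (simp add: finite_invs pswap_S_inf)
  have image: "?t ` invs u \<subseteq> invs ?v"
    using assms(2-4) by (fastforce simp: transpose_pair_def invs_def pswap_def split: if_splits)
  have new: "E \<subseteq> invs ?v"
    using assms(2-4) E by (auto simp: invs_def pswap_def)
  have disjoint: "?t ` invs u \<inter> E = {}"
  proof (intro equals0I)
    fix p assume "p \<in> ?t ` invs u \<inter> E"
    then obtain q where "q \<in> invs u" "p = ?t q" "p \<in> E" by blast
    moreover have "?t p = p" "p \<notin> invs u"
      using \<open>p \<in> E\<close> E assms(4) by (auto simp: transpose_pair_def invs_def)
    ultimately show False
      using transpose_pair_involution[OF assms(3), of q] by simp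
  qed
  have inj: "inj_on ?t (invs u)"
    by (rule inj_on_inverseI[where g = ?t]) (simp add: transpose_pair_involution assms(3))
  have "len u + card E = card (?t ` invs u) + card E"
    by (simp add: len_eq_card_invs card_image[OF inj])
  also have "\<dots> = card (?t ` invs u \<union> E)"
    using disjoint image new fin by (intro card_Un_disjoint[symmetric]) (auto intro: finite_subset)
  also have "\<dots> \<le> len ?v"
    unfolding len_eq_card_invs using image new fin by (intro card_mono) auto
  finally show ?thesis .
qed

lemma pswap_cover_less:
  assumes "u \<in> S_inf" "1 \<le> a" "a < b" "len (pswap u a b) = len u + 1"
  shows "u a < u b"
proof (rule ccontr)
  let ?v = "pswap u a b"
  assume "\<not> u a < u b"
  moreover have "u a \<noteq> u b"
    using S_inf_inj[OF assms(1)] assms(3) by (auto dest: injD)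
  ultimately have "?v a < ?v b"
    by simp
  then have "len ?v + card {(a, b)} \<le> len (pswap ?v a b)"
    using assms by (intro len_add_card_le_len_pswap) (auto simp: pswap_S_inf)
  then show False
    using assms by (simp add: pswap_pswap)
qed

lemma pswap_cover_no_between:
  assumes "u \<in> S_inf" "1 \<le> a" "a < b" "len (pswap u a b) = len u + 1" "a < c" "c < b"
  shows "\<not> (u a < u c \<and> u c < u b)"
proof
  assume between: "u a < u c \<and> u c < u b"
  then have "len u + card {(a, b), (a, c), (c, b)} \<le> len (pswap u a b)"
    using assms by (intro len_add_card_le_len_pswap) auto
  then show False
    using assms by simp
qed

lemma pswap_cover_between_above:
  assumes u: "u \<in> S_inf" and "1 \<le> a" "len (pswap u a b) = len u + 1"
    and "a < c" "c < b" "u a < u c"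
  shows "u b < u c"
proof -
  have "u c \<noteq> u b"
    using S_inf_inj[OF u] \<open>c < b\<close> by (auto dest: injD)
  with pswap_cover_no_between[OF assms(1-2) _ assms(3-5)] assms(4-6) show ?thesis
    by auto
qed

lemma pswap_cover_between_below:
  assumes u: "u \<in> S_inf" and "1 \<le> a" "len (pswap u a b) = len u + 1"
    and "a < c" "c < b" "u c < u b"
  shows "u c < u a"
proof -
  have "u c \<noteq> u a"
    using S_inf_inj[OF u] \<open>a < c\<close> by (auto dest: injD)
  with pswap_cover_no_between[OF assms(1-2) _ assms(3-5)] assms(4-6) show ?thesis
    by auto
qed

lemma kchain_len: "kchain k u w ps \<Longrightarrow> len w = len u + length ps"
  by (induction k u w ps rule: kchain.induct) auto

lemma kchain_kle: "kchain k u w ps \<Longrightarrow> kle k u w"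
proof (induction k u w ps rule: kchain.induct)
  case (1 k u w)
  then show ?case by (simp add: kle_def)
next
  case (2 k u w a b ps)
  then have "kcover k u (pswap u a b)" and "kle k (pswap u a b) w"
    by (auto simp: kcover_def)
  then show ?case
    unfolding kle_def by (rule converse_rtranclp_into_rtranclp)
qed

lemma kchain_positions: "kchain k u w ps \<Longrightarrow> (c, d) \<in> set ps \<Longrightarrow> 1 \<le> c \<and> c \<le> k \<and> k < d"
  by (induction k u w ps rule: kchain.induct) auto

lemma kchain_Cons_less: "kchain k u w ((a, b) # ps) \<Longrightarrow> u \<in> S_inf \<Longrightarrow> u a < u b"
  by (rule pswap_cover_less) auto

lemma kchain_Cons_S_inf: "kchain k u w ((a, b) # ps) \<Longrightarrow> u \<in> S_inf \<Longrightarrow> pswap u a b \<in> S_inf"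
  by (rule pswap_S_inf) auto

lemma kchain_left_mono: "kchain k u w ps \<Longrightarrow> u \<in> S_inf \<Longrightarrow> p \<le> k \<Longrightarrow> u p \<le> w p"
proof (induction k u w ps rule: kchain.induct)
  case (2 k u w a b ps)
  have "u p \<le> pswap u a b p"
    using "2.prems" kchain_Cons_less[OF "2.prems"(1,2)] by (cases "p = a") (auto simp: pswap_other)
  also have "\<dots> \<le> w p"
    using "2.IH" "2.prems" kchain_Cons_S_inf[OF "2.prems"(1,2)] by simp
  finally show ?case .
qed simp

lemma kchain_right_antimono: "kchain k u w ps \<Longrightarrow> u \<in> S_inf \<Longrightarrow> k < p \<Longrightarrow> w p \<le> u p"
proof (induction k u w ps rule: kchain.induct)
  case (2 k u w a b ps)
  have "w p \<le> pswap u a b p"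
    using "2.IH" "2.prems" kchain_Cons_S_inf[OF "2.prems"(1,2)] by simp
  also have "\<dots> \<le> u p"
    using "2.prems" kchain_Cons_less[OF "2.prems"(1,2)] by (cases "p = b") (auto simp: pswap_other)
  finally show ?case .
qed simp

lemma kchain_step_values:
  "kchain k u w ps \<Longrightarrow> u \<in> S_inf \<Longrightarrow> (c, d) \<in> set ps \<Longrightarrow> u c < u d \<and> u c < w c \<and> w d < u d"
proof (induction k u w ps rule: kchain.induct)
  case (2 k u w a b ps)
  let ?v = "pswap u a b"
  have tail: "kchain k ?v w ps" and ab: "a \<le> k" "k < b"
    using "2.prems"(1) by simp_all
  have v: "?v \<in> S_inf" and "u a < u b"
    using kchain_Cons_S_inf kchain_Cons_less "2.prems"(1,2) by blast+
  show ?case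
  proof (cases "(c, d) = (a, b)")
    case True
    have "?v a \<le> w a" "w b \<le> ?v b"
      using kchain_left_mono[OF tail v] kchain_right_antimono[OF tail v] ab by blast+
    with True \<open>u a < u b\<close> show ?thesis
      by simp
  next
    case False
    then have cd: "(c, d) \<in> set ps"
      using "2.prems"(3) by auto
    then have "c \<le> k" "k < d"
      using kchain_positions[OF tail] by auto
    have "?v c < ?v d \<and> ?v c < w c \<and> w d < ?v d"
      using "2.IH"[OF tail v cd] .
    moreover have "u c \<le> ?v c"
      using \<open>u a < u b\<close> \<open>c \<le> k\<close> ab by (cases "c = a") (auto simp: pswap_other)
    moreover have "?v d \<le> u d"
      using \<open>u a < u b\<close> \<open>k < d\<close> ab by (cases "d = b") (auto simp: pswap_other)
    ultimately show ?thesis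
      by linarith
  qed
qed simp

lemma kchain_left_moved: "kchain k u w ps \<Longrightarrow> p \<le> k \<Longrightarrow> u p \<noteq> w p \<Longrightarrow> \<exists>d. (p, d) \<in> set ps"
proof (induction k u w ps rule: kchain.induct)
  case (2 k u w a b ps)
  show ?case
  proof (cases "p = a")
    case False
    with 2 have "pswap u a b p = u p"
      by (simp add: pswap_other)
    with 2 show ?thesis
      by auto
  qed auto
qed simp

lemma pswap_cover_preserves_left_order:
  assumes u: "u \<in> S_inf" and ab: "1 \<le> a" "a \<le> k" "k < b"
    and cover: "len (pswap u a b) = len u + 1"
    and pq: "p < q" "q \<le> k" "u p < u q"
  shows "pswap u a b p < pswap u a b q"
proof (cases "p = a")
  case True
  then have "a < q" "q < b"
    using ab pq by simp_all
  with True pq have "u b < u q"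
    using pswap_cover_between_above[OF u ab(1) cover] by simp
  with True \<open>q < b\<close> pq show ?thesis
    by (simp add: pswap_other)
next
  case False
  have "u a < u b"
    using pswap_cover_less[OF u ab(1) _ cover] ab by simp
  have "p \<noteq> b" "q \<noteq> b"
    using ab pq by auto
  with False have "pswap u a b p = u p"
    by (simp add: pswap_other)
  moreover have "u q \<le> pswap u a b q"
    using \<open>u a < u b\<close> \<open>q \<noteq> b\<close> by (cases "q = a") (simp_all add: pswap_other)
  ultimately show ?thesis
    using pq by linarith
qed

lemma pswap_cover_preserves_right_order:
  assumes u: "u \<in> S_inf" and ab: "1 \<le> a" "a \<le> k" "k < b"
    and cover: "len (pswap u a b) = len u + 1"
    and pq: "p < q" "k < p" "u p < u q"
  shows "pswap u a b p < pswap u a b q"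
proof (cases "q = b")
  case True
  then have "a < p" "p < b"
    using ab pq by simp_all
  with True pq have "u p < u a"
    using pswap_cover_between_below[OF u ab(1) cover] by simp
  with True \<open>a < p\<close> pq show ?thesis
    by (simp add: pswap_other)
next
  case False
  have "u a < u b"
    using pswap_cover_less[OF u ab(1) _ cover] ab by simp
  have "p \<noteq> a" "q \<noteq> a"
    using ab pq by auto
  with False have "pswap u a b q = u q"
    by (simp add: pswap_other)
  moreover have "pswap u a b p \<le> u p"
    using \<open>u a < u b\<close> \<open>p \<noteq> a\<close> by (cases "p = b") (simp_all add: pswap_other)
  ultimately show ?thesis
    using pq by linarith
qed

lemma kchain_preserves_order:
  "kchain k u w ps \<Longrightarrow> u \<in> S_inf \<Longrightarrow> p < q \<Longrightarrow> q \<le> k \<or> k < p \<Longrightarrow> u p < u q \<Longrightarrow> w p < w q"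
proof (induction k u w ps rule: kchain.induct)
  case (2 k u w a b ps)
  from "2.prems"(4) have "pswap u a b p < pswap u a b q"
  proof
    assume "q \<le> k"
    with "2.prems" show ?thesis
      by (intro pswap_cover_preserves_left_order[of u a k b]) simp_all
  next
    assume "k < p"
    with "2.prems" show ?thesis
      by (intro pswap_cover_preserves_right_order[of u a k b]) simp_all
  qed
  moreover have "pswap u a b \<in> S_inf"
    using kchain_Cons_S_inf "2.prems"(1,2) .
  ultimately show ?case
    using "2.IH" "2.prems" by simp
qed simp

definition chain_inv :: "(nat \<Rightarrow> nat) \<Rightarrow> nat \<times> nat \<Rightarrow> nat \<times> nat \<Rightarrow> bool" where
  "chain_inv w x y \<longleftrightarrow>
     w (fst x) < w (fst y) \<or> (w (fst x) = w (fst y) \<and> w (snd y) < w (snd x))"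

abbreviation inversion_free :: "(nat \<Rightarrow> nat) \<Rightarrow> (nat \<times> nat) list \<Rightarrow> bool" where
  "inversion_free w \<equiv> sorted_wrt (\<lambda>x y. \<not> chain_inv w x y)"

lemma chain_inversions_empty_iff: "chain_inversions w ps = {} \<longleftrightarrow> inversion_free w ps"
  by (auto simp: chain_inversions_def chain_inv_def sorted_wrt_iff_nth_less)

lemma not_chain_inv_iff:
  "\<not> chain_inv w (a, b) (c, d) \<longleftrightarrow> w c \<le> w a \<and> (w c = w a \<longrightarrow> w b \<le> w d)"
  by (auto simp: chain_inv_def)

lemma pswap_cover_crossing_left_of:
  assumes u: "u \<in> S_inf" and cd: "1 \<le> c" "c \<le> k" "k < d"
    and cover: "len (pswap u c d) = len u + 1"
    and "a \<le> k" "u c < u a" "u a < u d"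
  shows "a < c"
proof (rule ccontr)
  assume "\<not> a < c"
  moreover have "a \<noteq> c"
    using \<open>u c < u a\<close> by auto
  ultimately have "u d < u a"
    using pswap_cover_between_above[OF u cd(1) cover] assms(6-7) cd by simp
  with \<open>u a < u d\<close> show False
    by simp
qed

lemma kchain_no_crossing:
  "kchain k u w ps \<Longrightarrow> u \<in> S_inf \<Longrightarrow> \<forall>(c, d) \<in> set ps. w c < w a \<Longrightarrow> a \<le> k \<Longrightarrow>
   u a = w a \<Longrightarrow> k < q \<Longrightarrow> w q < w a \<Longrightarrow> u q \<le> w a"
proof (induction k u w ps rule: kchain.induct)
  case (2 k u w c d ps)
  let ?v = "pswap u c d"
  have tail: "kchain k ?v w ps" and cd: "c \<le> k" "k < d"
    using "2.prems"(1) by simp_all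
  have v: "?v \<in> S_inf"
    using kchain_Cons_S_inf "2.prems"(1,2) .
  have "w c < w a"
    using "2.prems"(3) by simp
  then have "c \<noteq> a" "d \<noteq> a" "q \<noteq> c"
    using cd "2.prems"(4,6) by auto
  then have va: "?v a = w a"
    using "2.prems"(5) by (simp add: pswap_other)
  have IH: "?v q \<le> w a"
    using "2.IH"[OF tail v _ "2.prems"(4) va "2.prems"(6,7)] "2.prems"(3) by simp
  show ?case
  proof (cases "q = d")
    case False
    with \<open>q \<noteq> c\<close> IH show ?thesis
      by (simp add: pswap_other)
  next
    case True
    show ?thesis
    proof (rule ccontr)
      assume "\<not> u q \<le> w a"
      have "u c \<noteq> u a"
        using S_inf_inj[OF "2.prems"(2)] \<open>c \<noteq> a\<close> by (auto dest: injD)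
      with IH True "2.prems"(5) have "u c < u a"
        by simp
      moreover have "u a < u d"
        using \<open>\<not> u q \<le> w a\<close> True "2.prems"(5) by simp
      ultimately have "a < c"
        using "2.prems"(1,2,4) by (intro pswap_cover_crossing_left_of[of u c k d a]) simp_all
      moreover have "?v a < ?v c"
        using va True \<open>\<not> u q \<le> w a\<close> by simp
      ultimately have "w a < w c"
        using kchain_preserves_order[OF tail v] cd by blast
      with \<open>w c < w a\<close> show False
        by simp
    qed
  qed
qed simp

lemma kchain_right_stays_above:
  assumes chain: "kchain k u w ps" and u: "u \<in> S_inf" and below: "\<forall>(c, d) \<in> set ps. w c < w a"
    and "a \<le> k" "k < q" "u a < u q"
  shows "w a \<le> w q"
proof (rule ccontr)
  assume "\<not> w a \<le> w q"
  have "u a = w a"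
  proof (rule ccontr)
    assume "u a \<noteq> w a"
    then obtain d where "(a, d) \<in> set ps"
      using kchain_left_moved[OF chain \<open>a \<le> k\<close>] by blast
    with below show False
      by auto
  qed
  with assms \<open>\<not> w a \<le> w q\<close> have "u q \<le> u a"
    using kchain_no_crossing[OF chain u] by simp
  with \<open>u a < u q\<close> show False
    by simp
qed

lemma inversion_free_fst_less:
  assumes "inj w" and free: "inversion_free w ((a, b) # (a', b') # ps)" and "a' \<noteq> a"
    and "(c, d) \<in> set ((a', b') # ps)"
  shows "w c < w a"
proof -
  have "w a' \<le> w a"
    using free by (simp add: not_chain_inv_iff)
  moreover have "w a' \<noteq> w a"
    using \<open>inj w\<close> \<open>a' \<noteq> a\<close> by (auto dest: injD)
  moreover have "w c \<le> w a'"
    using free assms(4) by (auto simp: not_chain_inv_iff)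
  ultimately show ?thesis
    by simp
qed

lemma kchain_Cons_right_beyond:
  assumes chain: "kchain k u w ((a, b) # ps)" and u: "u \<in> S_inf"
    and "b < q" "u a < u q"
  shows "w b < w q"
proof -
  have tail: "kchain k (pswap u a b) w ps" and "a \<le> k" "k < b"
    using chain by simp_all
  with assms have "pswap u a b b < pswap u a b q"
    by (simp add: pswap_other)
  with \<open>k < b\<close> \<open>b < q\<close> show ?thesis
    using kchain_preserves_order[OF tail kchain_Cons_S_inf[OF chain u]] by blast
qed

lemma inversion_free_right_lower_bound:
  "kchain k u w ((a, b) # ps) \<Longrightarrow> u \<in> S_inf \<Longrightarrow> inj w \<Longrightarrow> inversion_free w ((a, b) # ps) \<Longrightarrow>
   k < q \<Longrightarrow> u a < u q \<Longrightarrow> w b \<le> w q"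
proof (induction ps arbitrary: u b)
  case Nil
  then have "w = pswap u a b" "a \<le> k"
    by simp_all
  with Nil.prems(5,6) show ?case
    by (cases "q = b") (auto simp: pswap_other)
next
  case (Cons p ps)
  obtain a' b' where p: "p = (a', b')"
    by fastforce
  let ?v = "pswap u a b"
  have tail: "kchain k ?v w ((a', b') # ps)" and ab: "1 \<le> a" "a \<le> k" "k < b"
    and cover: "len ?v = len u + 1"
    using Cons.prems(1) p by simp_all
  have v: "?v \<in> S_inf"
    using kchain_Cons_S_inf Cons.prems(1,2) .
  consider "b < q" | "q = b" | "q < b"
    by fastforce
  then show ?case
  proof cases
    case 1
    with Cons.prems show ?thesis
      by (fastforce dest: kchain_Cons_right_beyond)
  next
    case 3
    with ab Cons.prems(5,6) have "u b < u q"
      using pswap_cover_between_above[OF Cons.prems(2) ab(1) cover] by simp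
    with ab Cons.prems(5) 3 have vq: "?v a < ?v q"
      by (simp add: pswap_other)
    show ?thesis
    proof (cases "a' = a")
      case True
      have "w b \<le> w b'"
        using Cons.prems(4) p True by (simp add: not_chain_inv_iff)
      also have "w b' \<le> w q"
        using Cons.IH[OF _ v Cons.prems(3) _ Cons.prems(5) vq] tail Cons.prems(4) p True by simp
      finally show ?thesis .
    next
      case False
      have "\<forall>(c, d) \<in> set ((a', b') # ps). w c < w a"
        using inversion_free_fst_less[OF Cons.prems(3)] Cons.prems(4) p False by blast
      then have "w a \<le> w q"
        using kchain_right_stays_above[OF tail v _ ab(2) Cons.prems(5) vq] by blast
      moreover have "w b \<le> u a" "u a < u b" "u b \<le> w a"
        using kchain_right_antimono[OF tail v ab(3)] kchain_Cons_less[OF Cons.prems(1,2)]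
          kchain_left_mono[OF tail v ab(2)] by simp_all
      ultimately show ?thesis
        by simp
    qed
  qed simp
qed

lemma inversion_free_condI:
  assumes chain: "kchain k u w ((a, b) # ps)" and u: "u \<in> S_inf"
    and free: "inversion_free w ((a, b) # ps)"
  shows "condI k u w a"
proof -
  let ?A = "{w j | j. 1 \<le> j \<and> j \<le> k \<and> u j < w j}"
  have "u a < w a"
    using kchain_step_values[OF chain u, of a b] by simp
  moreover have "w a \<in> ?A"
    using chain \<open>u a < w a\<close> by auto
  moreover have "y \<le> w a" if "y \<in> ?A" for y
  proof -
    obtain j where j: "y = w j" "j \<le> k" "u j < w j"
      using \<open>y \<in> ?A\<close> by blast
    then obtain d where "(j, d) \<in> set ((a, b) # ps)"
      using kchain_left_moved[OF chain] by fastforce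
    with free j show ?thesis
      by (auto simp: not_chain_inv_iff)
  qed
  moreover have "finite ?A"
    by (rule finite_subset[of _ "w ` {1..k}"]) auto
  ultimately show ?thesis
    unfolding condI_def by (intro conjI Max_eqI[symmetric]) auto
qed

lemma inversion_free_condII:
  assumes chain: "kchain k u w ((a, b) # ps)" and u: "u \<in> S_inf" and "inj w"
    and free: "inversion_free w ((a, b) # ps)"
  shows "condII k u w a b"
proof -
  let ?B = "{w j | j. j > k \<and> u j > u a \<and> u a \<ge> w j}"
  have tail: "kchain k (pswap u a b) w ps" and "k < b"
    using chain by simp_all
  have "u a < u b"
    using kchain_Cons_less[OF chain u] .
  moreover have "w b \<le> u a"
    using kchain_right_antimono[OF tail kchain_Cons_S_inf[OF chain u] \<open>k < b\<close>] by simp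
  moreover have "w b \<le> y" if "y \<in> ?B" for y
    using that inversion_free_right_lower_bound[OF chain u \<open>inj w\<close> free] by blast
  moreover have "finite ?B"
    by (rule finite_subset[of _ "{..u a}"]) auto
  ultimately show ?thesis
    unfolding condII_def using \<open>k < b\<close> by (intro conjI Min_eqI[symmetric]) auto
qed

lemma cm_chain_if_inversion_free:
  "kchain k u w ps \<Longrightarrow> u \<in> S_inf \<Longrightarrow> inj w \<Longrightarrow> ps \<noteq> [] \<Longrightarrow> inversion_free w ps \<Longrightarrow> cm_chain k u w ps"
proof (induction k u w ps rule: kchain.induct)
  case (2 k u w a b ps)
  have kle: "kle k u w" and len: "len w = len u + Suc (length ps)"
    using kchain_kle[OF "2.prems"(1)] kchain_len[OF "2.prems"(1)] by simp_all
  show ?case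
  proof (cases "ps = []")
    case True
    with "2.prems"(1) kle len show ?thesis
      by (auto intro: cm_base)
  next
    case False
    have "pswap u a b \<in> S_inf"
      using kchain_Cons_S_inf "2.prems"(1,2) .
    with "2.IH" "2.prems" False have "cm_chain k (pswap u a b) w ps"
      by simp
    moreover have "condI k u w a" "condII k u w a b"
      using inversion_free_condI inversion_free_condII "2.prems" by blast+
    ultimately show ?thesis
      using "2.prems"(1) kle len False by (auto intro: cm_step)
  qed
qed simp

lemma condI_condII_not_chain_inv:
  assumes chain: "kchain k u w ((a, b) # ps)" and u: "u \<in> S_inf" and "inj w"
    and I: "condI k u w a" and II: "condII k u w a b" and cd: "(c, d) \<in> set ps"
  shows "\<not> chain_inv w (a, b) (c, d)"
proof -
  let ?A = "{w j | j. 1 \<le> j \<and> j \<le> k \<and> u j < w j}"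
  let ?B = "{w j | j. j > k \<and> u j > u a \<and> u a \<ge> w j}"
  have cd': "(c, d) \<in> set ((a, b) # ps)"
    using cd by simp
  have step: "u c < u d" "u c < w c"
    using kchain_step_values[OF chain u cd'] by simp_all
  have pos: "1 \<le> c" "c \<le> k" "k < d"
    using kchain_positions[OF chain cd'] by simp_all
  have "finite ?A"
    by (rule finite_subset[of _ "w ` {1..k}"]) auto
  then have "w c \<le> w a"
    using I step pos unfolding condI_def by (auto intro: Max_ge)
  moreover have "w b \<le> w d" if "c = a"
  proof (cases "w d \<le> u a")
    case True
    have "finite ?B"
      by (rule finite_subset[of _ "{..u a}"]) auto
    with True that step pos show ?thesis
      using II unfolding condII_def by (auto intro: Min_le)
  next
    case False
    with II show ?thesis
      by (simp add: condII_def)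
  qed
  ultimately show ?thesis
    using \<open>inj w\<close> by (auto simp: not_chain_inv_iff dest: injD)
qed

lemma inversion_free_if_cm_chain:
  "cm_chain k u w ps \<Longrightarrow> kchain k u w ps \<Longrightarrow> u \<in> S_inf \<Longrightarrow> inj w \<Longrightarrow> inversion_free w ps"
proof (induction rule: cm_chain.induct)
  case (cm_step u w a b ps)
  have "pswap u a b \<in> S_inf"
    using kchain_Cons_S_inf cm_step.prems(1,2) .
  with cm_step.IH cm_step.prems have "inversion_free w ps"
    by simp
  moreover have "\<not> chain_inv w (a, b) y" if "y \<in> set ps" for y
    using that condI_condII_not_chain_inv[OF cm_step.prems(1,2,3) cm_step.hyps(6,7)]
    by (cases y rule: prod.exhaust) simp
  ultimately show ?case
    by simp
qed simp

theorem mainTheorem3: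
  fixes k :: nat and u w :: "nat \<Rightarrow> nat" and ps :: "(nat \<times> nat) list"
  assumes "k \<ge> 1" and "u \<in> S_inf" and "w \<in> S_inf"
    and "kle k u w" and "u \<noteq> w"
    and "kchain k u w ps"
  shows "cm_chain k u w ps \<longleftrightarrow> chain_inversions w ps = {}"
proof -
  have "inj w"
    using S_inf_inj[OF assms(3)] .
  moreover have "ps \<noteq> []"
    using assms(5,6) by auto
  ultimately show ?thesis
    unfolding chain_inversions_empty_iff
    using cm_chain_if_inversion_free inversion_free_if_cm_chain assms(2,6) by blast
qed

end
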